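(* Let $p$ be a prime and $f(x)=(x-x_1)\cdots(x-x_r)\in\mathbb{F}_p[x_1,\ldots,x_r][x]$. Let $r,e,d$ be integers with $r\ge2$, $\frac{p-1}{2}<e\le p-1$, $1\le d\le p$. Then for all $1\le i\le r$ and $1\le j\le r$, the element $\left\{\left(\frac{\partial}{\partial x}\right)^{p-d}f(x)^e\right\}[x_i^p,x_j]$ is divisible by $\prod_{1\le \ell\le r,\ \ell\ne i}(x_i-x_\ell)^{2e-(p-1)}$ in $\mathbb{F}_p[x_1,\ldots,x_r]$.
   Context: $x_1,\dots,x_r$ are independent indeterminates over $\mathbb{F}_p$. For a field $K$ of characteristic $p$ and $F(x)\in K(x)$, write uniquely $F(x)=\sum_{i=0}^{p-1}F_i(x^p)x^i$ with $F_i(x^p)\in K(x^p)$, and define $F[t,x]=\sum_{i=0}^{p-1}F_i(t)x^i$ for a new variable $t$; $F[x_i^p,x_j]$ denotes the substitution $t=x_i^p$, $x=x_j$. *)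

theory Defs
  imports "HOL-Library.Poly_Mapping" "HOL-Computational_Algebra.Polynomial"
    "Berlekamp_Zassenhaus.Finite_Field"
begin

text \<open>The polynomial ring F_p[x_1, x_2, ...] : polynomials as finitely supported maps
  from monomials (finitely supported exponent vectors) to coefficients in F_p = 'p mod_ring.\<close>
type_synonym 'p mpoly = "(nat \<Rightarrow>\<^sub>0 nat) \<Rightarrow>\<^sub>0 'p mod_ring"

definition mvar :: "nat \<Rightarrow> 'p::prime_card mpoly" where
  "mvar i = Poly_Mapping.single (Poly_Mapping.single i 1) 1"

definition in_vars :: "nat \<Rightarrow> 'p::prime_card mpoly \<Rightarrow> bool" where
  "in_vars r q \<longleftrightarrow> (\<forall>m\<in>Poly_Mapping.keys q. Poly_Mapping.keys m \<subseteq> {1..r})"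

text \<open>For F(x) = sum_k F_k(x^p) x^k (k < p), F[t,x] = sum_k F_k(t) x^k;
  here evaluated at t = a, x = b.\<close>
definition bracket_subst :: "'p::prime_card mpoly poly \<Rightarrow> 'p mpoly \<Rightarrow> 'p mpoly \<Rightarrow> 'p mpoly" where
  "bracket_subst F a b =
     (\<Sum>n\<le>degree F. coeff F n * a ^ (n div CARD('p)) * b ^ (n mod CARD('p)))"

definition fpoly :: "nat \<Rightarrow> 'p::prime_card mpoly poly" where
  "fpoly r = (\<Prod>l\<in>{1..r}. [:- mvar l, 1:])"

end

theory Submission
  imports Defs
begin

text \<open>Put Y = x - x_i, so that f^e = Y^e Q(Y) with Q(Y) = prod_{l /= i} (Y + x_i - x_l)^e;
  the coefficient of Y^k in Q is divisible by prod_{l /= i} (x_i - x_l)^(e - k). Splitting Q at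
  degree p - e gives f^e = G + Y^p H, where every coefficient of G is divisible by
  prod_{l /= i} (x_i - x_l)^(2e - (p - 1)). In characteristic p, Y^p = x^p - x_i^p has derivative
  0, so the derivatives of Y^p H are Y^p times those of H, and
  {(x^p - x_i^p) W}[t, x] = (t - x_i^p) W[t, x] vanishes at t = x_i^p. Only G survives, and
  divisibility of all coefficients is preserved by differentiation and by the bracket.\<close>

lemma in_vars_0 [simp]: "in_vars r 0"
  by (simp add: in_vars_def)

lemma in_vars_1 [simp]: "in_vars r 1"
  by (simp add: in_vars_def)

lemma in_vars_add [simp]: "in_vars r a \<Longrightarrow> in_vars r b \<Longrightarrow> in_vars r (a + b)"
  unfolding in_vars_def using keys_add[of a b] by blast

lemma in_vars_uminus [simp]: "in_vars r a \<Longrightarrow> in_vars r (- a)"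
  by (simp add: in_vars_def)

lemma in_vars_diff [simp]: "in_vars r a \<Longrightarrow> in_vars r b \<Longrightarrow> in_vars r (a - b)"
  unfolding in_vars_def using keys_diff[of a b] by blast

lemma in_vars_mult [simp]:
  assumes "in_vars r a" and "in_vars r b"
  shows "in_vars r (a * b)"
  unfolding in_vars_def
proof
  fix m
  assume "m \<in> Poly_Mapping.keys (a * b)"
  then obtain u v where "m = u + v" "u \<in> Poly_Mapping.keys a" "v \<in> Poly_Mapping.keys b"
    using keys_mult[of a b] by blast
  with assms show "Poly_Mapping.keys m \<subseteq> {1..r}"
    unfolding in_vars_def using keys_add[of u v] by blast
qed

lemma in_vars_power [simp]: "in_vars r a \<Longrightarrow> in_vars r (a ^ n)"
  by (induction n) auto

lemma in_vars_sum: "(\<And>x. x \<in> A \<Longrightarrow> in_vars r (f x)) \<Longrightarrow> in_vars r (sum f A)"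
  by (induction A rule: infinite_finite_induct) auto

lemma in_vars_of_nat [simp]: "in_vars r (of_nat n)"
  by (induction n) auto

lemma in_vars_mvar: "l \<in> {1..r} \<Longrightarrow> in_vars r (mvar l)"
  unfolding in_vars_def mvar_def by auto

definition dvd_in_vars :: "nat \<Rightarrow> 'p::prime_card mpoly \<Rightarrow> 'p mpoly \<Rightarrow> bool" where
  "dvd_in_vars r a b \<longleftrightarrow> (\<exists>q. in_vars r q \<and> b = a * q)"

lemma dvd_in_vars_0 [simp]: "dvd_in_vars r a 0"
  unfolding dvd_in_vars_def by (auto intro: exI[of _ 0])

lemma dvd_in_vars_1: "in_vars r b \<Longrightarrow> dvd_in_vars r 1 b"
  unfolding dvd_in_vars_def by auto

lemma dvd_in_vars_add:
  assumes "dvd_in_vars r a b" and "dvd_in_vars r a c"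
  shows "dvd_in_vars r a (b + c)"
proof -
  obtain q q' where "in_vars r q" "b = a * q" "in_vars r q'" "c = a * q'"
    using assms unfolding dvd_in_vars_def by blast
  then show ?thesis
    unfolding dvd_in_vars_def by (intro exI[of _ "q + q'"]) (simp add: distrib_left)
qed

lemma dvd_in_vars_mult_mult:
  assumes "dvd_in_vars r a b" and "dvd_in_vars r c d"
  shows "dvd_in_vars r (a * c) (b * d)"
proof -
  obtain q q' where "in_vars r q" "b = a * q" "in_vars r q'" "d = c * q'"
    using assms unfolding dvd_in_vars_def by blast
  then show ?thesis
    unfolding dvd_in_vars_def by (intro exI[of _ "q * q'"]) (simp add: ac_simps)
qed

lemma dvd_in_vars_mult_left: "dvd_in_vars r a b \<Longrightarrow> in_vars r c \<Longrightarrow> dvd_in_vars r a (c * b)"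
  using dvd_in_vars_mult_mult[of r 1 c a b] by (simp add: dvd_in_vars_1)

lemma dvd_in_vars_mult_right: "dvd_in_vars r a b \<Longrightarrow> in_vars r c \<Longrightarrow> dvd_in_vars r a (b * c)"
  using dvd_in_vars_mult_left[of r a b c] by (simp add: mult.commute)

lemma dvd_in_vars_sum:
  "(\<And>x. x \<in> A \<Longrightarrow> dvd_in_vars r a (f x)) \<Longrightarrow> dvd_in_vars r a (sum f A)"
  by (induction A rule: infinite_finite_induct) (auto intro: dvd_in_vars_add)

lemma dvd_in_vars_power: "in_vars r a \<Longrightarrow> m \<le> n \<Longrightarrow> dvd_in_vars r (a ^ m) (a ^ n)"
  unfolding dvd_in_vars_def by (intro exI[of _ "a ^ (n - m)"]) (simp flip: power_add)

definition poly_in_vars :: "nat \<Rightarrow> 'p::prime_card mpoly poly \<Rightarrow> bool" where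
  "poly_in_vars r F \<longleftrightarrow> (\<forall>n. in_vars r (coeff F n))"

definition coeffs_dvd_in_vars :: "nat \<Rightarrow> 'p::prime_card mpoly \<Rightarrow> 'p mpoly poly \<Rightarrow> bool" where
  "coeffs_dvd_in_vars r a F \<longleftrightarrow> (\<forall>n. dvd_in_vars r a (coeff F n))"

lemma poly_in_vars_0 [simp]: "poly_in_vars r 0"
  by (simp add: poly_in_vars_def)

lemma poly_in_vars_pCons: "in_vars r a \<Longrightarrow> poly_in_vars r F \<Longrightarrow> poly_in_vars r (pCons a F)"
  by (auto simp: poly_in_vars_def coeff_pCons split: nat.split)

lemma poly_in_vars_1 [simp]: "poly_in_vars r 1"
  by (simp add: poly_in_vars_def coeff_1 of_bool_def)

lemma poly_in_vars_mult: "poly_in_vars r F \<Longrightarrow> poly_in_vars r G \<Longrightarrow> poly_in_vars r (F * G)"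
  by (simp add: poly_in_vars_def coeff_mult in_vars_sum)

lemma poly_in_vars_power: "poly_in_vars r F \<Longrightarrow> poly_in_vars r (F ^ n)"
  by (induction n) (auto intro: poly_in_vars_mult)

lemma coeffs_dvd_in_vars_mult:
  "coeffs_dvd_in_vars r a F \<Longrightarrow> poly_in_vars r G \<Longrightarrow> coeffs_dvd_in_vars r a (G * F)"
  unfolding coeffs_dvd_in_vars_def poly_in_vars_def coeff_mult
  by (auto intro!: dvd_in_vars_sum dvd_in_vars_mult_left)

lemma coeffs_dvd_in_vars_pcompose:
  assumes "coeffs_dvd_in_vars r a F" and "poly_in_vars r G"
  shows "coeffs_dvd_in_vars r a (pcompose F G)"
  using assms(1)
proof (induction F)
  case (pCons c F)
  have "coeffs_dvd_in_vars r a F"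
    using pCons.prems unfolding coeffs_dvd_in_vars_def by (metis coeff_pCons_Suc)
  then have "coeffs_dvd_in_vars r a (G * pcompose F G)"
    using pCons.IH assms(2) coeffs_dvd_in_vars_mult by blast
  moreover have "dvd_in_vars r a c"
    using pCons.prems unfolding coeffs_dvd_in_vars_def by (metis coeff_pCons_0)
  ultimately show ?case
    unfolding coeffs_dvd_in_vars_def pcompose_pCons
    by (auto simp: coeff_pCons split: nat.split intro: dvd_in_vars_add)
qed simp

lemma coeffs_dvd_in_vars_pderiv:
  "coeffs_dvd_in_vars r a F \<Longrightarrow> coeffs_dvd_in_vars r a (pderiv F)"
  unfolding coeffs_dvd_in_vars_def coeff_pderiv by (auto intro!: dvd_in_vars_mult_left)

lemma coeffs_dvd_in_vars_pderiv_funpow: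
  "coeffs_dvd_in_vars r a F \<Longrightarrow> coeffs_dvd_in_vars r a ((pderiv ^^ s) F)"
  by (induction s) (auto intro: coeffs_dvd_in_vars_pderiv)

lemma pderiv_funpow_add: "(pderiv ^^ s) (F + G) = (pderiv ^^ s) F + (pderiv ^^ s) G"
  by (induction s) (auto simp: pderiv_add)

lemma pderiv_funpow_mult_left:
  assumes "pderiv F = 0"
  shows "(pderiv ^^ s) (F * G) = F * (pderiv ^^ s) G"
  by (induction s) (auto simp: pderiv_mult assms)

lemma pderiv_power_char:
  fixes F :: "'a::{comm_ring_1,semiring_no_zero_divisors} poly"
  shows "pderiv (F ^ CHAR('a)) = 0"
proof (cases "CHAR('a)")
  case (Suc m)
  then show ?thesis
    using of_nat_CHAR[where 'a = 'a] unfolding Suc pderiv_power_Suc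
    by (simp add: of_nat_poly del: of_nat_Suc)
qed simp

lemma semiring_char_mpoly [simp]: "CHAR('p::prime_card mpoly) = CARD('p)"
proof (rule CHAR_eqI)
  show "of_nat CARD('p) = (0::'p mpoly)"
    by (simp flip: single_of_nat)
  fix n
  assume "of_nat n = (0::'p mpoly)"
  then have "Poly_Mapping.lookup (of_nat n :: 'p mpoly) 0 = 0"
    by simp
  then have "of_nat n = (0::'p mod_ring)"
    by (simp add: lookup_of_nat)
  then show "CARD('p) dvd n"
    by (simp add: of_nat_eq_0_iff_char_dvd)
qed

lemma linear_power_char:
  fixes c :: "'a::comm_ring_1"
  assumes "prime CHAR('a)"
  shows "[:-c, 1:] ^ CHAR('a) = monom 1 CHAR('a) - [:c ^ CHAR('a):]"
proof -
  have "(c + -c) ^ CHAR('a) = c ^ CHAR('a) + (-c) ^ CHAR('a)"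
    using assms by (rule freshmans_dream) simp
  then have neg: "(-c) ^ CHAR('a) = - (c ^ CHAR('a))"
    using assms prime_gt_0_nat by (simp add: eq_neg_iff_add_eq_0 add.commute zero_power)
  have "[:-c, 1:] ^ CHAR('a) = (monom 1 1 + [:-c:]) ^ CHAR('a)"
    by (simp add: monom_altdef)
  also have "\<dots> = monom 1 1 ^ CHAR('a) + [:-c:] ^ CHAR('a)"
    using assms by (intro freshmans_dream) simp_all
  also have "\<dots> = monom 1 CHAR('a) - [:c ^ CHAR('a):]"
    using neg by (simp add: monom_power poly_const_pow)
  finally show ?thesis .
qed

lemma bracket_subst_eq_sum_lessThan:
  fixes F :: "'p::prime_card mpoly poly"
  assumes "degree F < N"
  shows "bracket_subst F a b = (\<Sum>n<N. coeff F n * a ^ (n div CARD('p)) * b ^ (n mod CARD('p)))"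
  unfolding bracket_subst_def
  by (rule sum.mono_neutral_left) (use assms in \<open>auto simp: coeff_eq_0\<close>)

lemma bracket_subst_add:
  fixes F G :: "'p::prime_card mpoly poly"
  shows "bracket_subst (F + G) a b = bracket_subst F a b + bracket_subst G a b"
proof -
  define N where "N = Suc (max (degree F) (degree G))"
  have "degree (F + G) < N" "degree F < N" "degree G < N"
    unfolding N_def using degree_add_le_max[of F G] by auto
  then show ?thesis
    by (simp add: bracket_subst_eq_sum_lessThan[of _ N] distrib_right sum.distrib)
qed

lemma bracket_subst_smult:
  fixes F :: "'p::prime_card mpoly poly"
  shows "bracket_subst (smult u F) a b = u * bracket_subst F a b"
proof -
  have "degree (smult u F) < Suc (degree F)" "degree F < Suc (degree F)"
    using degree_smult_le[of u F] by auto
  then show ?thesis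
    by (simp only: bracket_subst_eq_sum_lessThan coeff_smult sum_distrib_left mult.assoc)
qed

lemma bracket_subst_monom:
  fixes c :: "'p::prime_card mpoly"
  shows "bracket_subst (monom c n) a b = c * a ^ (n div CARD('p)) * b ^ (n mod CARD('p))"
proof -
  have "degree (monom c n) < Suc n"
    using degree_monom_le[of c n] by simp
  then show ?thesis
    by (simp add: bracket_subst_eq_sum_lessThan[of _ "Suc n"] coeff_monom if_distrib[of "\<lambda>x. x * _"])
qed

lemma bracket_subst_0 [simp]: "bracket_subst 0 a b = 0"
  by (simp add: bracket_subst_def)

lemma bracket_subst_sum:
  "bracket_subst (sum F A) a b = (\<Sum>k\<in>A. bracket_subst (F k) a b)"
  by (induction A rule: infinite_finite_induct) (simp_all add: bracket_subst_add)

lemma bracket_subst_monom_card_mult: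
  fixes W :: "'p::prime_card mpoly poly"
  shows "bracket_subst (monom 1 CARD('p) * W) a b = a * bracket_subst W a b"
proof -
  have "monom 1 CARD('p) * W = monom 1 CARD('p) * (\<Sum>k\<le>degree W. monom (coeff W k) k)"
    by (simp only: poly_as_sum_of_monoms)
  also have "\<dots> = (\<Sum>k\<le>degree W. monom (coeff W k) (k + CARD('p)))"
    by (simp add: sum_distrib_left mult_monom add.commute)
  finally have "bracket_subst (monom 1 CARD('p) * W) a b
      = (\<Sum>k\<le>degree W. a * (coeff W k * a ^ (k div CARD('p)) * b ^ (k mod CARD('p))))"
    by (simp add: bracket_subst_sum bracket_subst_monom ac_simps)
  also have "\<dots> = a * bracket_subst W a b"
    by (simp add: bracket_subst_def sum_distrib_left)
  finally show ?thesis .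
qed

lemma bracket_subst_linear_power_card_mult:
  fixes c b :: "'p::prime_card mpoly"
  shows "bracket_subst ([:-c, 1:] ^ CARD('p) * W) (c ^ CARD('p)) b = 0"
proof -
  have "[:-c, 1:] ^ CARD('p) = monom 1 CARD('p) - [:c ^ CARD('p):]"
    using linear_power_char[of c] prime_card[where 'a = 'p] by simp
  then have eq: "[:-c, 1:] ^ CARD('p) * W = monom 1 CARD('p) * W + smult (- (c ^ CARD('p))) W"
    by (simp add: left_diff_distrib)
  show ?thesis
    unfolding eq bracket_subst_add bracket_subst_smult bracket_subst_monom_card_mult by simp
qed

lemma dvd_in_vars_bracket_subst:
  assumes "coeffs_dvd_in_vars r a F" and "in_vars r s" and "in_vars r t"
  shows "dvd_in_vars r a (bracket_subst F s t)"
  using assms unfolding bracket_subst_def coeffs_dvd_in_vars_def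
  by (auto intro!: dvd_in_vars_sum dvd_in_vars_mult_right)

lemma dvd_in_vars_bracket_subst_pderiv_funpow:
  fixes c :: "'p::prime_card mpoly"
  assumes "F = G + [:-c, 1:] ^ CARD('p) * H" and "coeffs_dvd_in_vars r a G"
    and "in_vars r c" and "in_vars r b"
  shows "dvd_in_vars r a (bracket_subst ((pderiv ^^ s) F) (c ^ CARD('p)) b)"
proof -
  have "pderiv ([:-c, 1:] ^ CARD('p)) = 0"
    using pderiv_power_char[of "[:-c, 1:]"] by simp
  then have "bracket_subst ((pderiv ^^ s) F) (c ^ CARD('p)) b
      = bracket_subst ((pderiv ^^ s) G) (c ^ CARD('p)) b"
    by (simp add: assms(1) pderiv_funpow_add pderiv_funpow_mult_left bracket_subst_add
        bracket_subst_linear_power_card_mult)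
  then show ?thesis
    using assms by (simp add: dvd_in_vars_bracket_subst coeffs_dvd_in_vars_pderiv_funpow)
qed

lemma dvd_in_vars_coeff_prod_linear_power:
  assumes "finite S" and "\<And>l. l \<in> S \<Longrightarrow> in_vars r (u l)" and "m + w \<le> e"
  shows "dvd_in_vars r (\<Prod>l\<in>S. u l ^ w) (coeff (\<Prod>l\<in>S. [:u l, 1:] ^ e) m)"
  using assms
proof (induction S arbitrary: m rule: finite_induct)
  case empty
  then show ?case
    by (simp add: dvd_in_vars_1 coeff_1 of_bool_def)
next
  case (insert l S)
  have "dvd_in_vars r (u l ^ w * (\<Prod>l\<in>S. u l ^ w))
      (\<Sum>k\<le>m. coeff ([:u l, 1:] ^ e) k * coeff (\<Prod>l\<in>S. [:u l, 1:] ^ e) (m - k))"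
  proof (intro dvd_in_vars_sum dvd_in_vars_mult_mult)
    fix k
    assume "k \<in> {..m}"
    then have "k \<le> e" and "w \<le> e - k"
      using insert.prems(2) by auto
    then show "dvd_in_vars r (u l ^ w) (coeff ([:u l, 1:] ^ e) k)"
      using insert.prems(1) coeff_linear_poly_power[of k e "u l" 1]
      by (simp add: dvd_in_vars_mult_left dvd_in_vars_power)
    show "dvd_in_vars r (\<Prod>l\<in>S. u l ^ w) (coeff (\<Prod>l\<in>S. [:u l, 1:] ^ e) (m - k))"
      using insert \<open>k \<in> {..m}\<close> by simp
  qed
  with insert.hyps show ?case
    by (simp add: coeff_mult)
qed

lemma pcompose_power: "pcompose (F ^ n) G = pcompose F G ^ n"
  by (induction n) (simp_all add: pcompose_1 pcompose_mult)

lemma pcompose_monom: "pcompose (monom c n) G = smult c (G ^ n)"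
  by (simp add: monom_altdef pcompose_smult pcompose_power pcompose_pCons)

lemma poly_cutoff_plus_shift:
  fixes F :: "'a::comm_semiring_1 poly"
  shows "poly_cutoff m F + monom 1 m * poly_shift m F = F"
  by (rule poly_eqI) (simp add: coeff_poly_cutoff coeff_monom_mult coeff_poly_shift)

lemma pcompose_poly_cutoff_shift:
  "pcompose F G = pcompose (poly_cutoff m F) G + G ^ m * pcompose (poly_shift m F) G"
proof -
  have "pcompose F G = pcompose (poly_cutoff m F + monom 1 m * poly_shift m F) G"
    by (simp only: poly_cutoff_plus_shift)
  then show ?thesis
    by (simp add: pcompose_add pcompose_mult pcompose_monom)
qed

lemma power_mult_pcompose_split:
  assumes "e \<le> n"
  shows "G ^ e * pcompose F G
    = G ^ e * pcompose (poly_cutoff (n - e) F) G + G ^ n * pcompose (poly_shift (n - e) F) G"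
proof -
  have "G ^ e * pcompose F G = G ^ e * pcompose (poly_cutoff (n - e) F) G
      + G ^ e * G ^ (n - e) * pcompose (poly_shift (n - e) F) G"
    by (simp only: pcompose_poly_cutoff_shift[of F G "n - e"] distrib_left mult.assoc)
  also have "G ^ e * G ^ (n - e) = G ^ n"
    using assms by (simp flip: power_add)
  finally show ?thesis .
qed

lemma fpoly_power_eq_pcompose:
  assumes "i \<in> {1..r}"
  shows "fpoly r ^ e = [:-mvar i, 1:] ^ e *
    pcompose (\<Prod>l\<in>{1..r} - {i}. [:mvar i - mvar l, 1:] ^ e) [:-mvar i, 1:]"
proof -
  have fpoly: "fpoly r = [:-mvar i, 1:] * (\<Prod>l\<in>{1..r} - {i}. [:-mvar l, 1:])"
    unfolding fpoly_def using assms by (simp add: prod.remove)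
  have "fpoly r ^ e = [:-mvar i, 1:] ^ e * (\<Prod>l\<in>{1..r} - {i}. [:-mvar l, 1:] ^ e)"
    unfolding fpoly by (simp only: power_mult_distrib prod_power_distrib)
  also have "(\<Prod>l\<in>{1..r} - {i}. [:-mvar l, 1:] ^ e)
      = pcompose (\<Prod>l\<in>{1..r} - {i}. [:mvar i - mvar l, 1:] ^ e) [:-mvar i, 1:]"
    by (simp add: pcompose_prod pcompose_power)
  finally show ?thesis .
qed

theorem lemma1:
  fixes r e d i j :: nat
  defines "p \<equiv> CARD('p::prime_card)"
  assumes "r \<ge> 2" and "p - 1 < 2 * e" and "e \<le> p - 1" and "1 \<le> d" and "d \<le> p"
    and "i \<in> {1..r}" and "j \<in> {1..r}"
  shows "\<exists>q :: 'p mpoly. in_vars r q \<and>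
    bracket_subst ((pderiv ^^ (p - d)) (fpoly r ^ e)) (mvar i ^ p) (mvar j)
      = (\<Prod>l\<in>{1..r} - {i}. (mvar i - mvar l) ^ (2 * e - (p - 1))) * q"
proof -
  define Y :: "'p mpoly poly" where "Y = [:-mvar i, 1:]"
  define Q :: "'p mpoly poly" where "Q = (\<Prod>l\<in>{1..r} - {i}. [:mvar i - mvar l, 1:] ^ e)"
  define D :: "'p mpoly" where "D = (\<Prod>l\<in>{1..r} - {i}. (mvar i - mvar l) ^ (2 * e - (p - 1)))"
  have "e \<le> p"
    using assms(4) by linarith
  then have split: "fpoly r ^ e = Y ^ e * pcompose (poly_cutoff (p - e) Q) Y
      + Y ^ p * pcompose (poly_shift (p - e) Q) Y"
    unfolding Y_def Q_def fpoly_power_eq_pcompose[OF assms(7)] by (rule power_mult_pcompose_split)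
  have "coeffs_dvd_in_vars r D (poly_cutoff (p - e) Q)"
    unfolding coeffs_dvd_in_vars_def coeff_poly_cutoff D_def Q_def
    using assms(3,4,7) by (auto intro!: dvd_in_vars_coeff_prod_linear_power in_vars_diff in_vars_mvar)
  moreover have "poly_in_vars r Y"
    unfolding Y_def using assms(7) by (intro poly_in_vars_pCons) (simp_all add: in_vars_mvar)
  ultimately have "coeffs_dvd_in_vars r D (Y ^ e * pcompose (poly_cutoff (p - e) Q) Y)"
    by (intro coeffs_dvd_in_vars_mult coeffs_dvd_in_vars_pcompose poly_in_vars_power)
  with split have "dvd_in_vars r D (bracket_subst ((pderiv ^^ (p - d)) (fpoly r ^ e)) (mvar i ^ p) (mvar j))"
    unfolding Y_def p_def
    by (rule dvd_in_vars_bracket_subst_pderiv_funpow) (use assms(7,8) in_vars_mvar in blast)+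
  then show ?thesis
    unfolding dvd_in_vars_def D_def by blast
qed

end
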